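(* Let $\mathfrak{G}$ be any graph with maximum degree $\mathfrak{d}\ge2$. Given any node $a$ of $\mathfrak{G}$ and any weight $w\in\mathbb{Z}_{>0}$, the number of connected clusters $\mathbf{W}$ with $a\in\mathbf{W}$ and $|\mathbf{W}|=w$ is at most $e\mathfrak{d}(1+e(\mathfrak{d}-1))^{w-1}$. If $\mathfrak{d}=1$, the number is at most $w$.
   Context: A cluster on a graph $\mathfrak{G}$ is a finite multiset of vertices, i.e. a finitely supported function $\mu$ from vertices to $\mathbb{Z}_{\ge0}$; its total weight is $|\mathbf{W}|=\sum_v\mu(v)$, its support is $\{v:\mu(v)\ge1\}$, and $a\in\mathbf{W}$ means $\mu(a)\ge1$. A cluster is connected if the subgraph of $\mathfrak{G}$ induced on its support is connected. *)

theory Defs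
  imports Complex_Main
begin

definition simple_graph :: "('a \<Rightarrow> 'a \<Rightarrow> bool) \<Rightarrow> bool" where
  "simple_graph E \<longleftrightarrow> (\<forall>x y. E x y \<longrightarrow> E y x) \<and> (\<forall>x. \<not> E x x)"

definition degree :: "('a \<Rightarrow> 'a \<Rightarrow> bool) \<Rightarrow> 'a \<Rightarrow> nat" where
  "degree E x = card {y. E x y}"

definition max_degree :: "('a \<Rightarrow> 'a \<Rightarrow> bool) \<Rightarrow> nat \<Rightarrow> bool" where
  "max_degree E d \<longleftrightarrow> (\<forall>x. finite {y. E x y} \<and> degree E x \<le> d) \<and> (\<exists>x. degree E x = d)"

text \<open>Clusters: finitely supported multiplicity functions.\<close>
definition cluster_support :: "('a \<Rightarrow> nat) \<Rightarrow> 'a set" where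
  "cluster_support \<mu> = {v. 1 \<le> \<mu> v}"

definition is_cluster :: "('a \<Rightarrow> nat) \<Rightarrow> bool" where
  "is_cluster \<mu> \<longleftrightarrow> finite (cluster_support \<mu>)"

definition cluster_weight :: "('a \<Rightarrow> nat) \<Rightarrow> nat" where
  "cluster_weight \<mu> = (\<Sum>v\<in>cluster_support \<mu>. \<mu> v)"

definition induced_connected :: "('a \<Rightarrow> 'a \<Rightarrow> bool) \<Rightarrow> 'a set \<Rightarrow> bool" where
  "induced_connected E S \<longleftrightarrow>
     (\<forall>x\<in>S. \<forall>y\<in>S. (x, y) \<in> {(u, v). u \<in> S \<and> v \<in> S \<and> E u v}\<^sup>*)"

definition connected_cluster :: "('a \<Rightarrow> 'a \<Rightarrow> bool) \<Rightarrow> ('a \<Rightarrow> nat) \<Rightarrow> bool" where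
  "connected_cluster E \<mu> \<longleftrightarrow> is_cluster \<mu> \<and> induced_connected E (cluster_support \<mu>)"

end

theory Submission
  imports Defs "HOL-Library.FuncSet"
begin

text \<open>Deleting the root v from a connected cluster leaves connected pieces, each containing a
neighbour of v and avoiding v; recording every piece at one chosen neighbour of v (its anchor)
encodes the cluster injectively by the multiplicity at v together with one possibly empty cluster
per neighbour. Hence the weight generating function F of the connected clusters rooted at a vertex
and avoiding its parent satisfies F(z) \<le> z/(1-z) (1 + F(z))^(d-1), which by induction on the
weight gives F(z) \<le> T whenever z/(1-z) (1+T)^(d-1) \<le> T. With z = 1/(1 + e(d-1)) a suitable
T exists, and the number of clusters of weight w at a is at most T(1+T)/z^w. For d = 1 a
connected cluster at a lives on a single edge and is determined by its multiplicity at a.\<close>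

lemma cluster_weight_eq_sum:
  assumes "finite A" "cluster_support \<mu> \<subseteq> A"
  shows "cluster_weight \<mu> = (\<Sum>x\<in>A. \<mu> x)"
  unfolding cluster_weight_def
  by (rule sum.mono_neutral_left) (use assms in \<open>auto simp: cluster_support_def\<close>)

lemma le_cluster_weight:
  assumes "is_cluster \<mu>"
  shows "\<mu> x \<le> cluster_weight \<mu>"
proof (cases "1 \<le> \<mu> x")
  case True
  then show ?thesis
    using assms unfolding cluster_weight_def is_cluster_def
    by (intro member_le_sum) (auto simp: cluster_support_def)
qed auto

lemma cluster_weight_zero [simp]: "cluster_weight (\<lambda>_. 0) = 0"
  by (simp add: cluster_weight_def cluster_support_def)

definition weight_gf :: "real \<Rightarrow> ('a \<Rightarrow> nat) set \<Rightarrow> real" where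
  "weight_gf z A = (\<Sum>\<mu>\<in>A. z ^ cluster_weight \<mu>)"

lemma weight_gf_nonneg: "0 \<le> z \<Longrightarrow> 0 \<le> weight_gf z A"
  by (simp add: weight_gf_def sum_nonneg)

lemma sum_power_le_geometric:
  fixes z :: real
  assumes "0 \<le> z" "z < 1"
  shows "(\<Sum>m=1..n. z ^ m) \<le> z / (1 - z)"
proof (cases "n = 0")
  case False
  then have "(\<Sum>m=1..n. z ^ m) = (z - z ^ Suc n) / (1 - z)"
    using assms by (simp add: sum_gp)
  then show ?thesis
    using assms by (simp add: divide_right_mono)
qed (use assms in simp)

definition induced_rel :: "('a \<Rightarrow> 'a \<Rightarrow> bool) \<Rightarrow> 'a set \<Rightarrow> ('a \<times> 'a) set" where
  "induced_rel E S = {(u, v). u \<in> S \<and> v \<in> S \<and> E u v}"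

lemma induced_connected_iff:
  "induced_connected E S \<longleftrightarrow> (\<forall>x\<in>S. \<forall>y\<in>S. (x, y) \<in> (induced_rel E S)\<^sup>*)"
  by (simp add: induced_connected_def induced_rel_def)

locale locally_finite_graph =
  fixes E :: "'a \<Rightarrow> 'a \<Rightarrow> bool"
  assumes edge_sym: "E x y \<Longrightarrow> E y x"
    and finite_neighbours: "finite {y. E x y}"
begin

lemma induced_rel_rtrancl_sym:
  assumes "(x, y) \<in> (induced_rel E S)\<^sup>*"
  shows "(y, x) \<in> (induced_rel E S)\<^sup>*"
proof -
  have "(induced_rel E S)\<inverse> = induced_rel E S"
    using edge_sym by (auto simp: induced_rel_def)
  then show ?thesis
    using rtrancl_converseI[OF assms] by simp
qed

definition component :: "'a set \<Rightarrow> 'a \<Rightarrow> 'a set" where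
  "component S b = {u. (b, u) \<in> (induced_rel E S)\<^sup>*}"

lemma component_subset: "component S b \<subseteq> insert b S"
  unfolding component_def by (auto simp: induced_rel_def elim: rtranclE)

lemma self_in_component: "b \<in> component S b"
  by (simp add: component_def)

lemma component_eq:
  assumes "x \<in> component S b"
  shows "component S x = component S b"
proof -
  have "(b, x) \<in> (induced_rel E S)\<^sup>*" "(x, b) \<in> (induced_rel E S)\<^sup>*"
    using assms induced_rel_rtrancl_sym by (auto simp: component_def)
  then show ?thesis
    unfolding component_def by (auto intro: rtrancl_trans)
qed

lemma induced_connected_component:
  assumes "b \<in> S"
  shows "induced_connected E (component S b)"
proof -
  let ?K = "component S b"
  have paths_in_K: "(b, y) \<in> (induced_rel E ?K)\<^sup>*" if "(b, y) \<in> (induced_rel E S)\<^sup>*" for y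
    using that
  proof (induction rule: rtrancl_induct)
    case (step y z)
    then have "(y, z) \<in> induced_rel E ?K"
      by (auto simp: component_def induced_rel_def intro: rtrancl_into_rtrancl)
    with step.IH show ?case by simp
  qed simp
  show ?thesis unfolding induced_connected_iff
  proof (intro ballI)
    fix x y assume "x \<in> ?K" "y \<in> ?K"
    then have "(b, x) \<in> (induced_rel E ?K)\<^sup>*" "(b, y) \<in> (induced_rel E ?K)\<^sup>*"
      using paths_in_K by (auto simp: component_def)
    then show "(x, y) \<in> (induced_rel E ?K)\<^sup>*"
      by (meson induced_rel_rtrancl_sym rtrancl_trans)
  qed
qed

lemma component_meets_neighbour:
  assumes "induced_connected E S" "v \<in> S" "u \<in> S - {v}"
  shows "\<exists>b\<in>component (S - {v}) u. E v b"
proof -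
  have "(u, v) \<in> (induced_rel E S)\<^sup>*"
    using assms unfolding induced_connected_iff by auto
  then have "u \<in> S - {v} \<longrightarrow> (\<exists>b. (u, b) \<in> (induced_rel E (S - {v}))\<^sup>* \<and> E b v)"
  proof (induction rule: converse_rtrancl_induct)
    case (step y z)
    show ?case
    proof
      assume y: "y \<in> S - {v}"
      show "\<exists>b. (y, b) \<in> (induced_rel E (S - {v}))\<^sup>* \<and> E b v"
      proof (cases "z = v")
        case True
        then show ?thesis using step(1) by (auto simp: induced_rel_def)
      next
        case False
        with step(1) have z: "z \<in> S - {v}" by (auto simp: induced_rel_def)
        with step.IH obtain b where "(z, b) \<in> (induced_rel E (S - {v}))\<^sup>*" "E b v" by auto
        moreover have "(y, z) \<in> induced_rel E (S - {v})"
          using step(1) y z by (auto simp: induced_rel_def)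
        ultimately show ?thesis by (meson converse_rtrancl_into_rtrancl)
      qed
    qed
  qed simp
  then show ?thesis
    using assms(3) edge_sym by (auto simp: component_def)
qed

definition anchor :: "'a \<Rightarrow> 'a set \<Rightarrow> 'a" where
  "anchor v K = (SOME b. b \<in> K \<and> E v b)"

lemma anchor_in_component:
  assumes "induced_connected E S" "v \<in> S" "u \<in> S - {v}"
  shows "anchor v (component (S - {v}) u) \<in> component (S - {v}) u"
    and "E v (anchor v (component (S - {v}) u))"
  using someI_ex[OF component_meets_neighbour[OF assms, unfolded Bex_def]]
  by (simp_all add: anchor_def)

text \<open>Each component of the support minus the root v is recorded once, at its anchor.\<close>

definition branch :: "('a \<Rightarrow> nat) \<Rightarrow> 'a \<Rightarrow> 'a \<Rightarrow> 'a \<Rightarrow> nat" where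
  "branch \<mu> v b u =
     (if b \<in> cluster_support \<mu> - {v} \<and> anchor v (component (cluster_support \<mu> - {v}) b) = b
         \<and> u \<in> component (cluster_support \<mu> - {v}) b
      then \<mu> u else 0)"

lemma branch_nonzeroD:
  assumes "branch \<mu> v b u \<noteq> 0"
  shows "u \<in> cluster_support \<mu> - {v}"
    and "anchor v (component (cluster_support \<mu> - {v}) b) = b"
    and "u \<in> component (cluster_support \<mu> - {v}) b"
    and "branch \<mu> v b u = \<mu> u"
  using assms component_subset[of "cluster_support \<mu> - {v}" b]
  by (auto simp: branch_def split: if_splits)

lemma cluster_support_branch: "cluster_support (branch \<mu> v b) \<subseteq> cluster_support \<mu> - {v}"
proof
  fix u assume "u \<in> cluster_support (branch \<mu> v b)"
  then have "branch \<mu> v b u \<noteq> 0" by (simp add: cluster_support_def)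
  then show "u \<in> cluster_support \<mu> - {v}" by (rule branch_nonzeroD(1))
qed

definition rooted_clusters :: "'a \<Rightarrow> 'a set \<Rightarrow> nat \<Rightarrow> ('a \<Rightarrow> nat) set" where
  "rooted_clusters v P n =
     {\<mu>. connected_cluster E \<mu> \<and> 1 \<le> \<mu> v \<and> (\<forall>p\<in>P. \<mu> p = 0) \<and> cluster_weight \<mu> \<le> n}"

lemma rooted_clusters_0: "rooted_clusters v P 0 = {}"
  using le_cluster_weight[of _ v] by (force simp: rooted_clusters_def connected_cluster_def)

context
  fixes \<mu> v P
  assumes connected: "connected_cluster E \<mu>" and root: "1 \<le> \<mu> v" and avoids: "\<forall>p\<in>P. \<mu> p = 0"
begin

private abbreviation "S \<equiv> cluster_support \<mu>"

lemma branch_at_anchor: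
  assumes u: "u \<in> S - {v}"
  defines "b \<equiv> anchor v (component (S - {v}) u)"
  shows "b \<in> {b. E v b} - P" and "branch \<mu> v b u = \<mu> u"
    and "\<And>b'. branch \<mu> v b' u \<noteq> 0 \<Longrightarrow> b' = b"
proof -
  have S_connected: "induced_connected E S" and v: "v \<in> S"
    using connected root by (auto simp: connected_cluster_def cluster_support_def)
  note b_in = anchor_in_component[OF S_connected v u, folded b_def]
  have b: "b \<in> S - {v}"
    using component_subset b_in(1) u by blast
  have same: "component (S - {v}) b = component (S - {v}) u"
    using component_eq[OF b_in(1)] .
  have "b \<notin> P"
    using avoids b by (auto simp: cluster_support_def)
  then show "b \<in> {b. E v b} - P"
    using b_in by auto
  show "branch \<mu> v b u = \<mu> u"
    using b same self_in_component[of u] by (simp add: branch_def b_def)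
  fix b' assume "branch \<mu> v b' u \<noteq> 0"
  then show "b' = b"
    using branch_nonzeroD(2,3) component_eq by (metis b_def)
qed

lemma sum_branches: "(\<Sum>b\<in>{b. E v b} - P. branch \<mu> v b u) = (if u \<in> S - {v} then \<mu> u else 0)"
proof (cases "u \<in> S - {v}")
  case True
  define b where "b = anchor v (component (S - {v}) u)"
  have "(\<Sum>b'\<in>{b. E v b} - P. branch \<mu> v b' u) = (\<Sum>b'\<in>{b}. branch \<mu> v b' u)"
    using branch_at_anchor[OF True, folded b_def] finite_neighbours
    by (intro sum.mono_neutral_right) auto
  with branch_at_anchor(2)[OF True] True show ?thesis
    by (simp add: b_def)
next
  case False
  then show ?thesis
    using branch_nonzeroD(1) by (auto intro!: sum.neutral)
qed

lemma cluster_weight_eq_root_plus_branches: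
  "\<mu> v + (\<Sum>b\<in>{b. E v b} - P. cluster_weight (branch \<mu> v b)) = cluster_weight \<mu>"
proof -
  have finite_S: "finite S" and v: "v \<in> S"
    using connected root by (auto simp: connected_cluster_def is_cluster_def cluster_support_def)
  have "(\<Sum>b\<in>{b. E v b} - P. cluster_weight (branch \<mu> v b))
      = (\<Sum>b\<in>{b. E v b} - P. \<Sum>u\<in>S - {v}. branch \<mu> v b u)"
    using finite_S cluster_support_branch by (intro sum.cong refl cluster_weight_eq_sum) auto
  also have "\<dots> = (\<Sum>u\<in>S - {v}. \<Sum>b\<in>{b. E v b} - P. branch \<mu> v b u)"
    by (rule sum.swap)
  also have "\<dots> = (\<Sum>u\<in>S - {v}. \<mu> u)"
    by (simp add: sum_branches)
  finally show ?thesis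
    using finite_S v by (simp add: cluster_weight_def sum.remove)
qed

lemma power_cluster_weight_eq_prod_branches:
  fixes z :: "'b :: comm_monoid_mult"
  shows "z ^ cluster_weight \<mu> = z ^ \<mu> v * (\<Prod>b\<in>{b. E v b} - P. z ^ cluster_weight (branch \<mu> v b))"
  by (simp add: power_add power_sum flip: cluster_weight_eq_root_plus_branches)

lemma branch_in_rooted_clusters:
  assumes weight: "cluster_weight \<mu> \<le> Suc n" and b: "b \<in> {b. E v b} - P"
  shows "branch \<mu> v b \<in> rooted_clusters b {v} n \<union> {\<lambda>_. 0}"
proof (cases "b \<in> S - {v} \<and> anchor v (component (S - {v}) b) = b")
  case True
  let ?K = "component (S - {v}) b"
  have branch_eq: "branch \<mu> v b = (\<lambda>u. if u \<in> ?K then \<mu> u else 0)"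
    using True by (auto simp: branch_def)
  have K_sub: "?K \<subseteq> S - {v}"
    using component_subset True by blast
  then have support: "cluster_support (branch \<mu> v b) = ?K"
    by (auto simp: branch_eq cluster_support_def)
  have "connected_cluster E (branch \<mu> v b)"
    unfolding connected_cluster_def is_cluster_def support
    using induced_connected_component True K_sub connected
    by (auto simp: connected_cluster_def is_cluster_def intro: finite_subset)
  moreover have "cluster_weight (branch \<mu> v b) \<le> n"
  proof -
    have "cluster_weight (branch \<mu> v b) \<le> (\<Sum>b\<in>{b. E v b} - P. cluster_weight (branch \<mu> v b))"
      using b finite_neighbours by (intro member_le_sum) auto
    then show ?thesis
      using cluster_weight_eq_root_plus_branches weight root by linarith
  qed
  moreover have "1 \<le> branch \<mu> v b b" "branch \<mu> v b v = 0"
    using True self_in_component K_sub by (auto simp: branch_eq cluster_support_def)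
  ultimately show ?thesis
    by (simp add: rooted_clusters_def)
next
  case False
  then have "branch \<mu> v b = (\<lambda>_. 0)"
    by (auto simp: branch_def)
  then show ?thesis
    by simp
qed

lemma eq_if_same_branches:
  assumes "\<mu>' v = \<mu> v" "\<forall>b\<in>{b. E v b} - P. branch \<mu>' v b = branch \<mu> v b" "1 \<le> \<mu> u"
  shows "\<mu>' u = \<mu> u"
proof (cases "u = v")
  case False
  with assms(3) have u: "u \<in> S - {v}"
    by (simp add: cluster_support_def)
  define b where "b = anchor v (component (S - {v}) u)"
  have "b \<in> {b. E v b} - P" "branch \<mu> v b u = \<mu> u"
    using branch_at_anchor[OF u] by (simp_all add: b_def)
  with assms(2,3) have "branch \<mu>' v b u = \<mu> u"
    by auto
  with assms(3) show ?thesis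
    using branch_nonzeroD(4)[of \<mu>' v b u] by auto
qed (use assms in simp)

end

definition decompose :: "'a \<Rightarrow> 'a set \<Rightarrow> ('a \<Rightarrow> nat) \<Rightarrow> nat \<times> ('a \<Rightarrow> 'a \<Rightarrow> nat)" where
  "decompose v P \<mu> = (\<mu> v, restrict (branch \<mu> v) ({b. E v b} - P))"

lemma decompose_in:
  assumes "\<mu> \<in> rooted_clusters v P (Suc n)"
  shows "decompose v P \<mu>
    \<in> {1..Suc n} \<times> (\<Pi>\<^sub>E b\<in>{b. E v b} - P. rooted_clusters b {v} n \<union> {\<lambda>_. 0})"
proof -
  have \<mu>: "connected_cluster E \<mu>" "1 \<le> \<mu> v" "\<forall>p\<in>P. \<mu> p = 0" "cluster_weight \<mu> \<le> Suc n"
    using assms by (auto simp: rooted_clusters_def)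
  then have "\<mu> v \<le> Suc n"
    using le_cluster_weight[of \<mu> v] by (auto simp: connected_cluster_def)
  with \<mu> show ?thesis
    using branch_in_rooted_clusters[OF \<mu>] by (simp add: decompose_def restrict_PiE_iff)
qed

lemma inj_on_decompose: "inj_on (decompose v P) (rooted_clusters v P n)"
proof (rule inj_onI)
  fix \<mu> \<mu>' assume \<mu>: "\<mu> \<in> rooted_clusters v P n" and \<mu>': "\<mu>' \<in> rooted_clusters v P n"
    and eq: "decompose v P \<mu> = decompose v P \<mu>'"
  have same_root: "\<mu>' v = \<mu> v"
    using eq by (simp add: decompose_def)
  have "restrict (branch \<mu>' v) ({b. E v b} - P) b = restrict (branch \<mu> v) ({b. E v b} - P) b" for b
    using eq by (simp add: decompose_def)
  then have same_branches: "\<forall>b\<in>{b. E v b} - P. branch \<mu>' v b = branch \<mu> v b"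
    by (metis restrict_apply')
  have \<mu>_props: "connected_cluster E \<mu>" "1 \<le> \<mu> v" "\<forall>p\<in>P. \<mu> p = 0"
    and \<mu>'_props: "connected_cluster E \<mu>'" "1 \<le> \<mu>' v" "\<forall>p\<in>P. \<mu>' p = 0"
    using \<mu> \<mu>' by (auto simp: rooted_clusters_def)
  have "\<forall>b\<in>{b. E v b} - P. branch \<mu> v b = branch \<mu>' v b"
    using same_branches by simp
  note on_support = eq_if_same_branches[OF \<mu>_props same_root same_branches]
    and on_support' = eq_if_same_branches[OF \<mu>'_props same_root[symmetric] this]
  show "\<mu> = \<mu>'"
  proof
    fix u
    show "\<mu> u = \<mu>' u"
      using on_support[of u] on_support'[of u] by linarith
  qed
qed

lemma finite_rooted_clusters: "finite (rooted_clusters v P n)"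
proof (induction n arbitrary: v P)
  case 0
  then show ?case
    by (simp add: rooted_clusters_0)
next
  case (Suc n)
  have "finite ({1..Suc n} \<times> (\<Pi>\<^sub>E b\<in>{b. E v b} - P. rooted_clusters b {v} n \<union> {\<lambda>_. 0}))"
    using Suc.IH finite_neighbours by (intro finite_cartesian_product finite_PiE) auto
  moreover have "decompose v P ` rooted_clusters v P (Suc n)
      \<subseteq> {1..Suc n} \<times> (\<Pi>\<^sub>E b\<in>{b. E v b} - P. rooted_clusters b {v} n \<union> {\<lambda>_. 0})"
    using decompose_in by (rule image_subsetI)
  ultimately have "finite (decompose v P ` rooted_clusters v P (Suc n))"
    by (rule finite_subset[rotated])
  then show ?case
    using inj_on_decompose finite_imageD by blast
qed

lemma sum_branch_choices:
  "(\<Sum>g\<in>(\<Pi>\<^sub>E b\<in>{b. E v b} - P. rooted_clusters b {v} n \<union> {\<lambda>_. 0}).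
      \<Prod>b\<in>{b. E v b} - P. z ^ cluster_weight (g b))
    = (\<Prod>b\<in>{b. E v b} - P. 1 + weight_gf z (rooted_clusters b {v} n))"
proof -
  have "(\<lambda>_. 0) \<notin> rooted_clusters b {v} n" for b
    by (simp add: rooted_clusters_def)
  then have choices: "(\<Sum>\<nu>\<in>rooted_clusters b {v} n \<union> {\<lambda>_. 0}. z ^ cluster_weight \<nu>)
      = 1 + weight_gf z (rooted_clusters b {v} n)" for b
    by (simp add: weight_gf_def finite_rooted_clusters)
  have "(\<Sum>g\<in>(\<Pi>\<^sub>E b\<in>{b. E v b} - P. rooted_clusters b {v} n \<union> {\<lambda>_. 0}).
      \<Prod>b\<in>{b. E v b} - P. z ^ cluster_weight (g b))
    = (\<Prod>b\<in>{b. E v b} - P. \<Sum>\<nu>\<in>rooted_clusters b {v} n \<union> {\<lambda>_. 0}. z ^ cluster_weight \<nu>)"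
    by (rule prod_sum_PiE[symmetric]) (simp_all add: finite_neighbours finite_rooted_clusters)
  then show ?thesis
    by (simp only: choices)
qed

lemma weight_gf_rooted_clusters_Suc_le:
  assumes z: "0 \<le> z" "z < 1"
  shows "weight_gf z (rooted_clusters v P (Suc n))
    \<le> z / (1 - z) * (\<Prod>b\<in>{b. E v b} - P. 1 + weight_gf z (rooted_clusters b {v} n))"
proof -
  let ?C = "rooted_clusters v P (Suc n)" and ?J = "{b. E v b} - P"
  let ?A = "\<lambda>b. rooted_clusters b {v} n \<union> {\<lambda>_. 0}"
  define F :: "nat \<times> ('a \<Rightarrow> 'a \<Rightarrow> nat) \<Rightarrow> real"
    where "F = (\<lambda>(m, g). z ^ m * (\<Prod>b\<in>?J. z ^ cluster_weight (g b)))"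
  have "weight_gf z ?C = (\<Sum>\<mu>\<in>?C. F (decompose v P \<mu>))"
    unfolding weight_gf_def F_def decompose_def
    by (auto simp: rooted_clusters_def intro!: sum.cong power_cluster_weight_eq_prod_branches)
  also have "\<dots> = (\<Sum>x\<in>decompose v P ` ?C. F x)"
    by (simp add: sum.reindex inj_on_decompose)
  also have "\<dots> \<le> (\<Sum>x\<in>{1..Suc n} \<times> (\<Pi>\<^sub>E b\<in>?J. ?A b). F x)"
  proof (rule sum_mono2)
    show "finite ({1..Suc n} \<times> (\<Pi>\<^sub>E b\<in>?J. ?A b))"
      using finite_neighbours finite_rooted_clusters by (intro finite_cartesian_product finite_PiE) auto
    show "decompose v P ` ?C \<subseteq> {1..Suc n} \<times> (\<Pi>\<^sub>E b\<in>?J. ?A b)"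
      using decompose_in by (rule image_subsetI)
    show "0 \<le> F x" for x
      using z by (auto simp: F_def split: prod.split intro!: mult_nonneg_nonneg prod_nonneg)
  qed
  also have "\<dots> = (\<Sum>m=1..Suc n. \<Sum>g\<in>(\<Pi>\<^sub>E b\<in>?J. ?A b). z ^ m * (\<Prod>b\<in>?J. z ^ cluster_weight (g b)))"
    by (simp add: F_def sum.cartesian_product)
  also have "\<dots> = (\<Sum>m=1..Suc n. z ^ m) * (\<Sum>g\<in>(\<Pi>\<^sub>E b\<in>?J. ?A b). \<Prod>b\<in>?J. z ^ cluster_weight (g b))"
    by (rule sum_product[symmetric])
  also have "(\<Sum>g\<in>(\<Pi>\<^sub>E b\<in>?J. ?A b). \<Prod>b\<in>?J. z ^ cluster_weight (g b))
      = (\<Prod>b\<in>?J. 1 + weight_gf z (rooted_clusters b {v} n))"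
    by (rule sum_branch_choices)
  also have "(\<Sum>m=1..Suc n. z ^ m) * \<dots> \<le> z / (1 - z) * \<dots>"
    using z sum_power_le_geometric[OF z]
    by (intro mult_right_mono prod_nonneg)
      (auto simp del: sum.cl_ivl_Suc intro: add_nonneg_nonneg weight_gf_nonneg)
  finally show ?thesis .
qed

lemma weight_gf_rooted_clusters_Suc_le_power:
  assumes z: "0 \<le> z" "z < 1" and "0 \<le> T"
    and branches: "\<forall>b\<in>{b. E v b} - P. weight_gf z (rooted_clusters b {v} n) \<le> T"
  shows "weight_gf z (rooted_clusters v P (Suc n)) \<le> z / (1 - z) * (1 + T) ^ card ({b. E v b} - P)"
proof -
  have "(\<Prod>b\<in>{b. E v b} - P. 1 + weight_gf z (rooted_clusters b {v} n)) \<le> (\<Prod>b\<in>{b. E v b} - P. 1 + T)"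
    using z branches by (intro prod_mono) (auto intro: add_nonneg_nonneg weight_gf_nonneg)
  then have "z / (1 - z) * (\<Prod>b\<in>{b. E v b} - P. 1 + weight_gf z (rooted_clusters b {v} n))
      \<le> z / (1 - z) * (1 + T) ^ card ({b. E v b} - P)"
    using z by (intro mult_left_mono) auto
  with weight_gf_rooted_clusters_Suc_le[OF z] show ?thesis
    by (rule order_trans)
qed

end

lemma exp_one_ge_five_halves: "5 / 2 \<le> exp (1 :: real)"
proof -
  have "(1 + 1 / real 8) ^ 8 \<le> exp (1 :: real)"
    by (rule exp_ge_one_plus_x_over_n_power_n) auto
  moreover have "5 / 2 \<le> (1 + 1 / real 8 :: real) ^ 8"
    by (simp add: power_divide)
  ultimately show ?thesis
    by linarith
qed

text \<open>With z = 1/(1 + e(d-1)), so that z/(1-z) = 1/(e(d-1)), the second inequality is the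
invariant of the induction below and the third turns the bound T(1+T) into e d. The natural
choice T = 1/(d-1) violates the third inequality when d = 2.\<close>

lemma threshold_exists:
  fixes d :: nat
  assumes "2 \<le> d"
  obtains T :: real
  where "0 \<le> T" "(1 + T) ^ (d - 1) \<le> exp 1 * (real d - 1) * T"
    and "(1 + exp 1 * (real d - 1)) * (T * (1 + T)) \<le> exp 1 * real d"
proof (cases "d = 2")
  case True
  have e: "5 / 2 \<le> exp (1 :: real)"
    by (rule exp_one_ge_five_halves)
  show ?thesis
  proof (rule that[of "2 / 3"])
    show "(1 + 2 / 3) ^ (d - 1) \<le> exp 1 * (real d - 1) * (2 / 3 :: real)"
      using True e by simp
    show "(1 + exp 1 * (real d - 1)) * (2 / 3 * (1 + 2 / 3)) \<le> exp 1 * real d"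
      using True e by simp
  qed simp
next
  case False
  define m where "m = d - 1"
  have m: "2 \<le> real m" "real d - 1 = real m" "real d = real m + 1" "d - 1 = m"
    using assms False by (auto simp: m_def)
  have e: "1 \<le> exp (1 :: real)"
    by simp
  show ?thesis
  proof (rule that[of "1 / real m"])
    have "(1 + 1 / real m) ^ m \<le> exp 1"
      using exp_ge_one_plus_x_over_n_power_n[of m 1] m(1) by simp
    then show "(1 + 1 / real m) ^ (d - 1) \<le> exp 1 * (real d - 1) * (1 / real m)"
      using m by simp
    have "2 \<le> real m * (real m - 1)"
      using mult_mono[of 2 "real m" 1 "real m - 1"] m(1) by simp
    then have "1 \<le> exp 1 * (real m * (real m - 1))"
      using mult_mono[OF e, of 1 "real m * (real m - 1)"] by simp
    then have "1 + exp 1 * real m \<le> exp 1 * real m ^ 2"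
      by (simp add: algebra_simps power2_eq_square)
    then have "(1 + exp 1 * real m) * (real m + 1) \<le> exp 1 * real m ^ 2 * (real m + 1)"
      using m(1) by (intro mult_right_mono) auto
    then show "(1 + exp 1 * (real d - 1)) * (1 / real m * (1 + 1 / real m)) \<le> exp 1 * real d"
      using m by (simp add: field_simps power2_eq_square)
  qed simp
qed

locale bounded_degree_graph = locally_finite_graph +
  fixes d :: nat
  assumes degree_le: "card {y. E x y} \<le> d"
begin

context
  fixes z T :: real
  assumes z: "0 \<le> z" "z < 1" and T: "0 \<le> T"
    and threshold: "z / (1 - z) * (1 + T) ^ (d - 1) \<le> T"
begin

lemma weight_gf_rooted_clusters_avoiding_le:
  "E v p \<Longrightarrow> weight_gf z (rooted_clusters v {p} n) \<le> T"
proof (induction n arbitrary: v p)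
  case 0
  then show ?case
    using T by (simp add: rooted_clusters_0 weight_gf_def)
next
  case (Suc n)
  have "\<forall>b\<in>{b. E v b} - {p}. weight_gf z (rooted_clusters b {v} n) \<le> T"
    using Suc.IH edge_sym by auto
  then have "weight_gf z (rooted_clusters v {p} (Suc n))
      \<le> z / (1 - z) * (1 + T) ^ card ({b. E v b} - {p})"
    by (rule weight_gf_rooted_clusters_Suc_le_power[OF z T])
  also have "\<dots> \<le> z / (1 - z) * (1 + T) ^ (d - 1)"
    using Suc.prems finite_neighbours degree_le[of v] z T
    by (intro mult_left_mono power_increasing) (auto simp: card_Diff_singleton)
  finally have "weight_gf z (rooted_clusters v {p} (Suc n)) \<le> z / (1 - z) * (1 + T) ^ (d - 1)" .
  with threshold show ?case
    by simp
qed

lemma weight_gf_rooted_clusters_le: "weight_gf z (rooted_clusters v {} n) \<le> T * (1 + T)"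
proof (cases n)
  case 0
  then show ?thesis
    using T by (simp add: rooted_clusters_0 weight_gf_def)
next
  case (Suc m)
  have "\<forall>b\<in>{b. E v b} - {}. weight_gf z (rooted_clusters b {v} m) \<le> T"
    using weight_gf_rooted_clusters_avoiding_le edge_sym by blast
  then have "weight_gf z (rooted_clusters v {} n) \<le> z / (1 - z) * (1 + T) ^ card ({b. E v b} - {})"
    unfolding Suc by (rule weight_gf_rooted_clusters_Suc_le_power[OF z T])
  also have "\<dots> \<le> z / (1 - z) * (1 + T) ^ Suc (d - 1)"
    using degree_le[of v] z T by (intro mult_left_mono power_increasing) auto
  also have "\<dots> = z / (1 - z) * (1 + T) ^ (d - 1) * (1 + T)"
    by simp
  also have "\<dots> \<le> T * (1 + T)"
    using threshold T by (intro mult_right_mono) auto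
  finally show ?thesis .
qed

end

lemma card_connected_clusters_le:
  assumes "2 \<le> d" "0 < w"
  shows "real (card {\<mu>. connected_cluster E \<mu> \<and> 1 \<le> \<mu> a \<and> cluster_weight \<mu> = w})
    \<le> exp 1 * real d * (1 + exp 1 * (real d - 1)) ^ (w - 1)"
proof -
  let ?N = "{\<mu>. connected_cluster E \<mu> \<and> 1 \<le> \<mu> a \<and> cluster_weight \<mu> = w}"
  define q where "q = 1 + exp 1 * (real d - 1)"
  obtain T where T: "0 \<le> T" "(1 + T) ^ (d - 1) \<le> exp 1 * (real d - 1) * T"
    and qT: "q * (T * (1 + T)) \<le> exp 1 * real d"
    using threshold_exists[OF assms(1)] unfolding q_def by blast
  have "0 < exp 1 * (real d - 1)"
    using assms(1) by simp
  then have q: "1 < q"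
    by (simp add: q_def)
  have z: "0 \<le> 1 / q" "1 / q < 1"
    using q by simp_all
  have "1 / q / (1 - 1 / q) = 1 / (q - 1)"
    using q by (simp add: field_simps)
  then have "1 / q / (1 - 1 / q) * (1 + T) ^ (d - 1) = (1 + T) ^ (d - 1) / (exp 1 * (real d - 1))"
    by (simp add: q_def)
  also have "\<dots> \<le> T"
    using T(2) assms(1) by (simp add: divide_le_eq mult.commute)
  finally have threshold: "1 / q / (1 - 1 / q) * (1 + T) ^ (d - 1) \<le> T" .
  have "real (card ?N) * (1 / q) ^ w = weight_gf (1 / q) ?N"
    by (simp add: weight_gf_def)
  also have "\<dots> \<le> weight_gf (1 / q) (rooted_clusters a {} w)"
    unfolding weight_gf_def using z
    by (intro sum_mono2 finite_rooted_clusters) (auto simp: rooted_clusters_def)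
  also have "\<dots> \<le> T * (1 + T)"
    by (rule weight_gf_rooted_clusters_le[OF z T(1) threshold])
  finally have "real (card ?N) \<le> q ^ w * (T * (1 + T))"
    using q by (simp add: power_one_over field_simps)
  also have "\<dots> = q ^ (w - 1) * (q * (T * (1 + T)))"
    using assms(2) by (simp add: power_eq_if)
  also have "\<dots> \<le> q ^ (w - 1) * (exp 1 * real d)"
    using q qT by (intro mult_left_mono) auto
  finally show ?thesis
    by (simp add: q_def mult_ac)
qed

lemma neighbour_unique:
  assumes "d \<le> 1" "E x y" "E x y'"
  shows "y = y'"
proof -
  have "card {y. E x y} \<le> Suc 0"
    using degree_le[of x] assms(1) by simp
  with assms(2,3) show ?thesis
    using finite_neighbours[of x] by (auto simp: card_le_Suc0_iff_eq)
qed

lemma cluster_support_subset_closed_neighbourhood: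
  assumes "d \<le> 1" "connected_cluster E \<mu>" "1 \<le> \<mu> a"
  shows "cluster_support \<mu> \<subseteq> insert a {y. E a y}"
proof
  fix u assume u: "u \<in> cluster_support \<mu>"
  have "(a, u) \<in> (induced_rel E (cluster_support \<mu>))\<^sup>*"
    using assms(2,3) u by (auto simp: connected_cluster_def induced_connected_iff cluster_support_def)
  then show "u \<in> insert a {y. E a y}"
  proof (induction rule: rtrancl_induct)
    case (step y z)
    then have yz: "E y z"
      by (simp add: induced_rel_def)
    show ?case
    proof (cases "y = a")
      case False
      with step.IH have "E y a"
        using edge_sym by auto
      then have "z = a"
        using neighbour_unique[OF assms(1) yz] by blast
      then show ?thesis
        by simp
    qed (use yz in simp)
  qed simp
qed

lemma card_connected_clusters_le_weight:
  assumes "d \<le> 1"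
  shows "card {\<mu>. connected_cluster E \<mu> \<and> 1 \<le> \<mu> a \<and> cluster_weight \<mu> = w} \<le> w"
proof -
  let ?N = "{\<mu>. connected_cluster E \<mu> \<and> 1 \<le> \<mu> a \<and> cluster_weight \<mu> = w}"
  have support: "cluster_support \<mu> \<subseteq> insert a {y. E a y}" if "\<mu> \<in> ?N" for \<mu>
    using cluster_support_subset_closed_neighbourhood[OF assms] that by blast
  have weight_on_edge: "\<mu> a + \<mu> b = w" if \<mu>: "\<mu> \<in> ?N" and b: "E a b" "b \<noteq> a" for \<mu> b
  proof -
    have "{y. E a y} = {b}"
      using b neighbour_unique[OF assms] by auto
    then have "cluster_weight \<mu> = (\<Sum>x\<in>{a, b}. \<mu> x)"
      using support[OF \<mu>] by (intro cluster_weight_eq_sum) auto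
    with \<mu> b show ?thesis
      by simp
  qed
  have "inj_on (\<lambda>\<mu>. \<mu> a) ?N"
  proof (rule inj_onI)
    fix \<mu> \<mu>' assume \<mu>: "\<mu> \<in> ?N" and \<mu>': "\<mu>' \<in> ?N" and same: "\<mu> a = \<mu>' a"
    show "\<mu> = \<mu>'"
    proof
      fix u
      consider "u = a" | "E a u" "u \<noteq> a" | "u \<notin> insert a {y. E a y}"
        by blast
      then show "\<mu> u = \<mu>' u"
      proof cases
        case 2
        then show ?thesis
          using weight_on_edge[OF \<mu>] weight_on_edge[OF \<mu>'] same by (metis add_left_cancel)
      next
        case 3
        then have "u \<notin> cluster_support \<mu>" "u \<notin> cluster_support \<mu>'"
          using support[OF \<mu>] support[OF \<mu>'] by auto
        then show ?thesis
          by (simp add: cluster_support_def)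
      qed (use same in simp)
    qed
  qed
  moreover have "(\<lambda>\<mu>. \<mu> a) ` ?N \<subseteq> {1..w}"
    using le_cluster_weight by (fastforce simp: connected_cluster_def)
  ultimately have "card ?N \<le> card {1..w}"
    by (intro card_inj_on_le) auto
  then show ?thesis
    by simp
qed

end

theorem proposition3p6:
  fixes E :: "'a \<Rightarrow> 'a \<Rightarrow> bool" and d :: nat and a :: 'a and w :: nat
  assumes "simple_graph E" and "max_degree E d" and "d \<ge> 1" and "w > 0"
  defines "N \<equiv> {\<mu>. connected_cluster E \<mu> \<and> \<mu> a \<ge> 1 \<and> cluster_weight \<mu> = w}"
  shows "finite N
    \<and> (d \<ge> 2 \<longrightarrow> real (card N) \<le> exp 1 * real d * (1 + exp 1 * (real d - 1)) ^ (w - 1))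
    \<and> (d = 1 \<longrightarrow> card N \<le> w)"
proof -
  interpret bounded_degree_graph E d
    using assms(1,2) by unfold_locales (auto simp: simple_graph_def max_degree_def degree_def)
  have "N \<subseteq> rooted_clusters a {} w"
    by (auto simp: N_def rooted_clusters_def)
  then have "finite N"
    using finite_rooted_clusters by (rule finite_subset)
  then show ?thesis
    using card_connected_clusters_le[OF _ assms(4)] card_connected_clusters_le_weight
    by (simp add: N_def)
qed

end
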